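(* Let $\sigma$ be an environment and $e$ an expression of iTML with $\sigma, e \Rightarrow v$. Let $\mathsf{fwd}_{\sigma,e} : \mathrm{Prefix}(\sigma,e) \to \mathrm{Prefix}(v)$ be the function sending $(\rho,e')$ to the unique $u$ with $\rho, e' \nearrow u$. Then $\mathsf{fwd}_{\sigma,e}$ preserves binary meets: for all $x, x' \in \mathrm{Prefix}(\sigma,e)$, $\mathsf{fwd}_{\sigma,e}(x \sqcap x') = \mathsf{fwd}_{\sigma,e}(x) \sqcap \mathsf{fwd}_{\sigma,e}(x')$.
   Context: Partial syntax ($\Box$ denotes a hole): expressions $e ::= x \mid () \mid \mathsf{inl}\,e \mid \mathsf{inr}\,e \mid (e_1,e_2) \mid \mathsf{fst}\,e \mid \mathsf{snd}\,e \mid \mathsf{fun}\,f(x).M \mid \Box$, where $M$ ranges over (partial) computations of the language (their structure is irrelevant here beyond the order below); values $v ::= () \mid \mathsf{inl}\,v \mid \mathsf{inr}\,v \mid (v_1,v_2) \mid \langle \rho, \mathsf{fun}\,f(x).M\rangle \mid \ell \mid \Box$; environments are finitely supported maps from variables to values, regarded as total with value $\Box$ outside their domain. $\sqsubseteq$ is the least order with $\Box \sqsubseteq t$ that is closed under all constructors componentwise (also for computations), pointwise on environments; on pairs $(\rho,e)$ it is componentwise. $\mathrm{Prefix}(t)=\{t'\mid t'\sqsubseteq t\}$; these are lattices, $\sqcap$ the meet. Evaluation $\rho,e\Rightarrow v$ (on hole-free terms): $\rho,x\Rightarrow\rho(x)$ for $x\in\mathrm{dom}(\rho)$; $\rho,()\Rightarrow()$;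 $\rho,\mathsf{fun}\,f(x).M\Rightarrow\langle\rho,\mathsf{fun}\,f(x).M\rangle$; $\mathsf{inl}$, $\mathsf{inr}$ and pairs evaluate componentwise; if $\rho,e\Rightarrow(v_1,v_2)$ then $\rho,\mathsf{fst}\,e\Rightarrow v_1$ and $\rho,\mathsf{snd}\,e\Rightarrow v_2$. Forward slicing $\rho,e\nearrow v$ (on partial terms): $\rho,\Box\nearrow\Box$; $\rho,x\nearrow\rho(x)$ for $x \in \mathrm{dom}(\rho)$; $\rho,()\nearrow()$; $\rho,\mathsf{fun}\,f(x).M\nearrow\langle\rho,\mathsf{fun}\,f(x).M\rangle$; if $\rho,e\nearrow v$ then $\rho,\mathsf{inl}\,e\nearrow\mathsf{inl}\,v$ and $\rho,\mathsf{inr}\,e\nearrow\mathsf{inr}\,v$; if $\rho,e_i\nearrow v_i$ then $\rho,(e_1,e_2)\nearrow(v_1,v_2)$; if $\rho,e\nearrow(v_1,v_2)$ then $\rho,\mathsf{fst}\,e\nearrow v_1$ and $\rho,\mathsf{snd}\,e\nearrow v_2$; if $\rho,e\nearrow\Box$ then $\rho,\mathsf{fst}\,e\nearrow\Box$ and $\rho,\mathsf{snd}\,e\nearrow\Box$. For $\sigma,e\Rightarrow v$, every element of $\mathrm{Prefix}(\sigma,e)$ has a unique $\nearrow$-image, lying in $\mathrm{Prefix}(v)$. *)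

theory Defs
  imports Main
begin

text \<open>Partial syntax of iTML (fragment). 'x = variables, 'm = (partial) computations,
  whose structure is abstracted; only their prefix order (class order) is used.\<close>

datatype ('x, 'm) exp =
    EVar 'x | EUnit | EInl "('x, 'm) exp" | EInr "('x, 'm) exp"
  | EPair "('x, 'm) exp" "('x, 'm) exp" | EFst "('x, 'm) exp" | ESnd "('x, 'm) exp"
  | EFun 'x 'x 'm | EHole

datatype ('x, 'm) val =
    VUnit | VInl "('x, 'm) val" | VInr "('x, 'm) val" | VPair "('x, 'm) val" "('x, 'm) val"
  | VClo "'x \<Rightarrow> ('x, 'm) val" 'x 'x 'm | VLoc nat | VHole

text \<open>Environments: total maps, value VHole outside the (finite) domain.\<close>
type_synonym ('x, 'm) env = "'x \<Rightarrow> ('x, 'm) val"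

definition edom :: "('x, 'm) env \<Rightarrow> 'x set" where
  "edom \<rho> = {y. \<rho> y \<noteq> VHole}"

inductive le_val :: "('x, 'm::order) val \<Rightarrow> ('x, 'm) val \<Rightarrow> bool" where
  "le_val VHole v"
| "le_val VUnit VUnit"
| "le_val a b \<Longrightarrow> le_val (VInl a) (VInl b)"
| "le_val a b \<Longrightarrow> le_val (VInr a) (VInr b)"
| "le_val a1 b1 \<Longrightarrow> le_val a2 b2 \<Longrightarrow> le_val (VPair a1 a2) (VPair b1 b2)"
| "(\<forall>y. le_val (\<rho> y) (\<rho>' y)) \<Longrightarrow> M \<le> M' \<Longrightarrow> le_val (VClo \<rho> f x M) (VClo \<rho>' f x M')"
| "le_val (VLoc l) (VLoc l)"

inductive le_exp :: "('x, 'm::order) exp \<Rightarrow> ('x, 'm) exp \<Rightarrow> bool" where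
  "le_exp EHole e"
| "le_exp (EVar x) (EVar x)"
| "le_exp EUnit EUnit"
| "le_exp a b \<Longrightarrow> le_exp (EInl a) (EInl b)"
| "le_exp a b \<Longrightarrow> le_exp (EInr a) (EInr b)"
| "le_exp a1 b1 \<Longrightarrow> le_exp a2 b2 \<Longrightarrow> le_exp (EPair a1 a2) (EPair b1 b2)"
| "le_exp a b \<Longrightarrow> le_exp (EFst a) (EFst b)"
| "le_exp a b \<Longrightarrow> le_exp (ESnd a) (ESnd b)"
| "M \<le> M' \<Longrightarrow> le_exp (EFun f x M) (EFun f x M')"

definition le_env :: "('x, 'm::order) env \<Rightarrow> ('x, 'm) env \<Rightarrow> bool" where
  "le_env \<rho> \<rho>' \<longleftrightarrow> (\<forall>y. le_val (\<rho> y) (\<rho>' y))"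

definition le_pair :: "('x, 'm::order) env \<times> ('x, 'm) exp \<Rightarrow> ('x, 'm) env \<times> ('x, 'm) exp \<Rightarrow> bool" where
  "le_pair p q \<longleftrightarrow> le_env (fst p) (fst q) \<and> le_exp (snd p) (snd q)"

definition prefix_val :: "('x, 'm::order) val \<Rightarrow> ('x, 'm) val set" where
  "prefix_val v = {u. le_val u v}"

definition prefix_pair :: "('x, 'm::order) env \<times> ('x, 'm) exp \<Rightarrow> (('x, 'm) env \<times> ('x, 'm) exp) set" where
  "prefix_pair p = {q. le_pair q p}"

definition is_meet_in :: "('a \<Rightarrow> 'a \<Rightarrow> bool) \<Rightarrow> 'a set \<Rightarrow> 'a \<Rightarrow> 'a \<Rightarrow> 'a \<Rightarrow> bool" where
  "is_meet_in le S a b c \<longleftrightarrow> c \<in> S \<and> le c a \<and> le c b \<and> (\<forall>d\<in>S. le d a \<longrightarrow> le d b \<longrightarrow> le d c)"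

text \<open>Hole-freeness (except inside computations, whose structure is abstracted).\<close>
inductive hf_val :: "('x, 'm) val \<Rightarrow> bool" where
  "hf_val VUnit"
| "hf_val a \<Longrightarrow> hf_val (VInl a)"
| "hf_val a \<Longrightarrow> hf_val (VInr a)"
| "hf_val a \<Longrightarrow> hf_val b \<Longrightarrow> hf_val (VPair a b)"
| "(\<forall>y. \<rho> y = VHole \<or> hf_val (\<rho> y)) \<Longrightarrow> finite (edom \<rho>) \<Longrightarrow> hf_val (VClo \<rho> f x M)"
| "hf_val (VLoc l)"

inductive eval :: "('x, 'm) env \<Rightarrow> ('x, 'm) exp \<Rightarrow> ('x, 'm) val \<Rightarrow> bool" where
  "x \<in> edom \<rho> \<Longrightarrow> eval \<rho> (EVar x) (\<rho> x)"
| "eval \<rho> EUnit VUnit"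
| "eval \<rho> (EFun f x M) (VClo \<rho> f x M)"
| "eval \<rho> e v \<Longrightarrow> eval \<rho> (EInl e) (VInl v)"
| "eval \<rho> e v \<Longrightarrow> eval \<rho> (EInr e) (VInr v)"
| "eval \<rho> e1 v1 \<Longrightarrow> eval \<rho> e2 v2 \<Longrightarrow> eval \<rho> (EPair e1 e2) (VPair v1 v2)"
| "eval \<rho> e (VPair v1 v2) \<Longrightarrow> eval \<rho> (EFst e) v1"
| "eval \<rho> e (VPair v1 v2) \<Longrightarrow> eval \<rho> (ESnd e) v2"

inductive fwd_slice :: "('x, 'm) env \<Rightarrow> ('x, 'm) exp \<Rightarrow> ('x, 'm) val \<Rightarrow> bool" where
  "fwd_slice \<rho> EHole VHole"
| "fwd_slice \<rho> (EVar x) (\<rho> x)"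
| "fwd_slice \<rho> EUnit VUnit"
| "fwd_slice \<rho> (EFun f x M) (VClo \<rho> f x M)"
| "fwd_slice \<rho> e v \<Longrightarrow> fwd_slice \<rho> (EInl e) (VInl v)"
| "fwd_slice \<rho> e v \<Longrightarrow> fwd_slice \<rho> (EInr e) (VInr v)"
| "fwd_slice \<rho> e1 v1 \<Longrightarrow> fwd_slice \<rho> e2 v2 \<Longrightarrow> fwd_slice \<rho> (EPair e1 e2) (VPair v1 v2)"
| "fwd_slice \<rho> e (VPair v1 v2) \<Longrightarrow> fwd_slice \<rho> (EFst e) v1"
| "fwd_slice \<rho> e (VPair v1 v2) \<Longrightarrow> fwd_slice \<rho> (ESnd e) v2"
| "fwd_slice \<rho> e VHole \<Longrightarrow> fwd_slice \<rho> (EFst e) VHole"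
| "fwd_slice \<rho> e VHole \<Longrightarrow> fwd_slice \<rho> (ESnd e) VHole"

definition fwd :: "('x, 'm) env \<times> ('x, 'm) exp \<Rightarrow> ('x, 'm) val" where
  "fwd p = (THE u. fwd_slice (fst p) (snd p) u)"

end

(*
  Forward slicing is monotone, so fwd q is a lower bound of fwd p and fwd p' in Prefix(v).
  For the other half the meet (\<rho>q, c) is never computed: it is enough that \<rho>q and c lie
  above every common lower bound of the corresponding components, a property inherited by
  subexpressions. Induction on the evaluation then shows that every d \<le> v below fwd p and
  fwd p' is below fwd q. At a variable x the crucial observation is that the environment
  sending x to d and everything else to a hole is a common lower bound, hence below \<rho>q.
*)
theory Submission
  imports Defs
begin

inductive_simps le_val_VHole_right: "le_val v VHole"
inductive_simps le_val_VInl_left: "le_val (VInl a) v"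
inductive_simps le_val_VInl_right: "le_val v (VInl a)"
inductive_simps le_val_VInr_left: "le_val (VInr a) v"
inductive_simps le_val_VInr_right: "le_val v (VInr a)"
inductive_simps le_val_VPair_left: "le_val (VPair a b) v"
inductive_simps le_val_VPair_right: "le_val v (VPair a b)"
inductive_simps le_val_VClo_right: "le_val v (VClo \<rho> f x M)"

inductive_simps le_exp_EVar_left: "le_exp (EVar x) e"
inductive_simps le_exp_EVar_right: "le_exp e (EVar x)"
inductive_simps le_exp_EUnit_left: "le_exp EUnit e"
inductive_simps le_exp_EUnit_right: "le_exp e EUnit"
inductive_simps le_exp_EInl_left: "le_exp (EInl a) e"
inductive_simps le_exp_EInl_right: "le_exp e (EInl a)"
inductive_simps le_exp_EInr_left: "le_exp (EInr a) e"
inductive_simps le_exp_EInr_right: "le_exp e (EInr a)"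
inductive_simps le_exp_EPair_left: "le_exp (EPair a b) e"
inductive_simps le_exp_EPair_right: "le_exp e (EPair a b)"
inductive_simps le_exp_EFst_left: "le_exp (EFst a) e"
inductive_simps le_exp_EFst_right: "le_exp e (EFst a)"
inductive_simps le_exp_ESnd_left: "le_exp (ESnd a) e"
inductive_simps le_exp_ESnd_right: "le_exp e (ESnd a)"
inductive_simps le_exp_EFun_left: "le_exp (EFun f x M) e"
inductive_simps le_exp_EFun_right: "le_exp e (EFun f x M)"

inductive_simps fwd_slice_EHole: "fwd_slice \<rho> EHole u"
inductive_simps fwd_slice_EVar: "fwd_slice \<rho> (EVar x) u"
inductive_simps fwd_slice_EUnit: "fwd_slice \<rho> EUnit u"
inductive_simps fwd_slice_EFun: "fwd_slice \<rho> (EFun f x M) u"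
inductive_simps fwd_slice_EInl: "fwd_slice \<rho> (EInl e) u"
inductive_simps fwd_slice_EInr: "fwd_slice \<rho> (EInr e) u"
inductive_simps fwd_slice_EPair: "fwd_slice \<rho> (EPair a b) u"
inductive_simps fwd_slice_EFst: "fwd_slice \<rho> (EFst e) u"
inductive_simps fwd_slice_ESnd: "fwd_slice \<rho> (ESnd e) u"

lemma fwd_slice_deterministic: "fwd_slice \<rho> e u \<Longrightarrow> fwd_slice \<rho> e u' \<Longrightarrow> u = u'"
proof (induction \<rho> e u arbitrary: u' rule: fwd_slice.induct)
  case (5 \<rho> e v) from "5.prems" show ?case unfolding fwd_slice_EInl by (auto dest: "5.IH")
next
  case (6 \<rho> e v) from "6.prems" show ?case unfolding fwd_slice_EInr by (auto dest: "6.IH")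
next
  case (7 \<rho> e1 v1 e2 v2) from "7.prems" show ?case unfolding fwd_slice_EPair by (auto dest: "7.IH")
next
  case (8 \<rho> e v1 v2) from "8.prems" show ?case unfolding fwd_slice_EFst by (auto dest: "8.IH")
next
  case (9 \<rho> e v1 v2) from "9.prems" show ?case unfolding fwd_slice_ESnd by (auto dest: "9.IH")
next
  case (10 \<rho> e) from "10.prems" show ?case unfolding fwd_slice_EFst by (auto dest: "10.IH")
next
  case (11 \<rho> e) from "11.prems" show ?case unfolding fwd_slice_ESnd by (auto dest: "11.IH")
qed (simp_all add: fwd_slice_EHole fwd_slice_EVar fwd_slice_EUnit fwd_slice_EFun)

lemma fwd_eq: "fwd_slice \<rho> e u \<Longrightarrow> fwd (\<rho>, e) = u"
  unfolding fwd_def by (auto dest: fwd_slice_deterministic)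

lemma eval_imp_fwd_slice: "eval \<rho> e v \<Longrightarrow> fwd_slice \<rho> e v"
  by (induction rule: eval.induct) (auto intro: fwd_slice.intros)

lemma fwd_slice_mono:
  fixes u u' :: "('x, 'm::order) val"
  shows "fwd_slice \<rho> e u \<Longrightarrow> fwd_slice \<rho>' e' u' \<Longrightarrow> le_env \<rho> \<rho>' \<Longrightarrow> le_exp e e' \<Longrightarrow> le_val u u'"
proof (induction \<rho> e u arbitrary: e' u' rule: fwd_slice.induct)
  case (2 \<rho> x) then show ?case by (auto simp: le_exp_EVar_left fwd_slice_EVar le_env_def)
next
  case (3 \<rho>) then show ?case by (auto simp: le_exp_EUnit_left fwd_slice_EUnit intro: le_val.intros)
next
  case (4 \<rho> f x M)
  then show ?case by (auto simp: le_exp_EFun_left fwd_slice_EFun le_env_def intro: le_val.intros)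
next
  case (5 \<rho> e v) then show ?case by (auto simp: le_exp_EInl_left fwd_slice_EInl intro!: le_val.intros)
next
  case (6 \<rho> e v) then show ?case by (auto simp: le_exp_EInr_left fwd_slice_EInr intro!: le_val.intros)
next
  case (7 \<rho> e1 v1 e2 v2)
  then show ?case by (auto simp: le_exp_EPair_left fwd_slice_EPair intro!: le_val.intros)
next
  case (8 \<rho> e v1 v2)
  then obtain e0 where "e' = EFst e0" "le_exp e e0" by (auto simp: le_exp_EFst_left)
  with "8.prems"(1) "8.IH"[OF _ "8.prems"(2)] show ?case
    by (auto simp: fwd_slice_EFst le_val_VPair_left le_val_VHole_right)
next
  case (9 \<rho> e v1 v2)
  then obtain e0 where "e' = ESnd e0" "le_exp e e0" by (auto simp: le_exp_ESnd_left)
  with "9.prems"(1) "9.IH"[OF _ "9.prems"(2)] show ?case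
    by (auto simp: fwd_slice_ESnd le_val_VPair_left le_val_VHole_right)
qed (auto intro: le_val.intros)

lemma fwd_slice_exists_below_eval:
  fixes \<rho> :: "('x, 'm::order) env"
  shows "eval \<sigma> e v \<Longrightarrow> le_env \<rho> \<sigma> \<Longrightarrow> le_exp a e \<Longrightarrow> \<exists>u. fwd_slice \<rho> a u"
proof (induction arbitrary: a rule: eval.induct)
  case (7 \<sigma> e v1 v2)
  show ?case
  proof (cases "a = EHole")
    case False
    with "7.prems"(2) obtain a0 where a: "a = EFst a0" "le_exp a0 e" by (auto simp: le_exp_EFst_right)
    with "7.IH"[OF "7.prems"(1)] obtain u where u: "fwd_slice \<rho> a0 u" by blast
    have "le_val u (VPair v1 v2)"
      using fwd_slice_mono[OF u eval_imp_fwd_slice[OF "7.hyps"] "7.prems"(1) a(2)] .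
    with u a(1) show ?thesis by (auto simp: le_val_VPair_right intro: fwd_slice.intros)
  qed (auto intro: fwd_slice.intros)
next
  case (8 \<sigma> e v1 v2)
  show ?case
  proof (cases "a = EHole")
    case False
    with "8.prems"(2) obtain a0 where a: "a = ESnd a0" "le_exp a0 e" by (auto simp: le_exp_ESnd_right)
    with "8.IH"[OF "8.prems"(1)] obtain u where u: "fwd_slice \<rho> a0 u" by blast
    have "le_val u (VPair v1 v2)"
      using fwd_slice_mono[OF u eval_imp_fwd_slice[OF "8.hyps"] "8.prems"(1) a(2)] .
    with u a(1) show ?thesis by (auto simp: le_val_VPair_right intro: fwd_slice.intros)
  qed (auto intro: fwd_slice.intros)
next
  case (6 \<sigma> e1 v1 e2 v2)
  then show ?case by (auto simp: le_exp_EPair_right intro: fwd_slice.intros) (blast intro: fwd_slice.intros)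
qed (auto simp: le_exp_EVar_right le_exp_EUnit_right le_exp_EFun_right le_exp_EInl_right
    le_exp_EInr_right intro: fwd_slice.intros)

text \<open>The half of the meet property of c that is inherited by subterms.\<close>
definition above_lower_bounds :: "('a \<Rightarrow> 'a \<Rightarrow> bool) \<Rightarrow> 'a \<Rightarrow> 'a \<Rightarrow> 'a \<Rightarrow> 'a \<Rightarrow> bool" where
  "above_lower_bounds le t a b c \<longleftrightarrow> (\<forall>d. le d t \<longrightarrow> le d a \<longrightarrow> le d b \<longrightarrow> le d c)"

lemma above_lower_bounds_envD:
  assumes "above_lower_bounds le_env \<sigma> \<rho>1 \<rho>2 \<rho>q"
    and "le_val d (\<sigma> x)" "le_val d (\<rho>1 x)" "le_val d (\<rho>2 x)"
  shows "le_val d (\<rho>q x)"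
proof -
  let ?\<rho>d = "(\<lambda>_. VHole)(x := d)"
  have "le_env ?\<rho>d \<sigma>" "le_env ?\<rho>d \<rho>1" "le_env ?\<rho>d \<rho>2"
    using assms(2-4) by (auto simp: le_env_def intro: le_val.intros)
  with assms(1) have "le_env ?\<rho>d \<rho>q" by (simp add: above_lower_bounds_def)
  then show ?thesis by (simp add: le_env_def split: if_splits)
qed

lemma above_lower_bounds_unary_exp:
  assumes K_inj: "inj K" and le_K_left: "\<And>x y. le_exp (K x) y \<longleftrightarrow> (\<exists>y0. y = K y0 \<and> le_exp x y0)"
    and meet: "above_lower_bounds le_exp (K e) (K a) (K b) c"
  obtains c0 where "c = K c0" "above_lower_bounds le_exp e a b c0"
proof -
  have le_K: "le_exp (K x) (K y) \<longleftrightarrow> le_exp x y" for x y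
    using le_K_left injD[OF K_inj] by blast
  have "le_exp (K EHole) c"
    using meet le_K by (auto simp: above_lower_bounds_def intro: le_exp.intros)
  then obtain c0 where "c = K c0" using le_K_left by blast
  moreover from meet have "above_lower_bounds le_exp e a b c0"
    unfolding above_lower_bounds_def \<open>c = K c0\<close> by (metis le_K)
  ultimately show thesis by (rule that)
qed

lemma above_lower_bounds_EPair:
  assumes meet: "above_lower_bounds le_exp (EPair e1 e2) (EPair a1 a2) (EPair b1 b2) c"
  obtains c1 c2 where "c = EPair c1 c2"
    "above_lower_bounds le_exp e1 a1 b1 c1" "above_lower_bounds le_exp e2 a2 b2 c2"
proof -
  have hole: "le_exp EHole x" for x :: "('a, 'b) exp" by (rule le_exp.intros)
  have "le_exp (EPair EHole EHole) c"
    using meet by (auto simp: above_lower_bounds_def intro: le_exp.intros)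
  then obtain c1 c2 where c: "c = EPair c1 c2" by (auto simp: le_exp_EPair_left)
  have "le_exp (EPair d1 d2) (EPair c1 c2)"
    if "le_exp d1 e1" "le_exp d1 a1" "le_exp d1 b1" "le_exp d2 e2" "le_exp d2 a2" "le_exp d2 b2" for d1 d2
    using meet that unfolding above_lower_bounds_def c by (blast intro: le_exp.intros)
  with hole have "above_lower_bounds le_exp e1 a1 b1 c1" "above_lower_bounds le_exp e2 a2 b2 c2"
    unfolding above_lower_bounds_def by (fastforce simp: le_exp_EPair_left)+
  with c show thesis by (rule that)
qed

lemma fwd_slice_EHole_le_val: "fwd_slice \<rho> EHole u \<Longrightarrow> le_val d u \<Longrightarrow> d = VHole"
  by (simp add: fwd_slice_EHole le_val_VHole_right)

text \<open>(\<rho>q, c) plays the meet of (\<rho>1, a) and (\<rho>2, b) among the prefixes of (\<sigma>, e),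
  where e is a subterm of the evaluated expression and v its value.\<close>
definition fwd_slice_preserves_glb ::
    "('x, 'm::order) env \<Rightarrow> ('x, 'm) env \<Rightarrow> ('x, 'm) env \<Rightarrow> ('x, 'm) exp \<Rightarrow> ('x, 'm) val \<Rightarrow> bool" where
  "fwd_slice_preserves_glb \<rho>1 \<rho>2 \<rho>q e v \<longleftrightarrow>
    (\<forall>a b c u1 u2 u3 d. le_exp a e \<longrightarrow> le_exp b e \<longrightarrow> above_lower_bounds le_exp e a b c \<longrightarrow>
      fwd_slice \<rho>1 a u1 \<longrightarrow> fwd_slice \<rho>2 b u2 \<longrightarrow> fwd_slice \<rho>q c u3 \<longrightarrow>
      le_val d v \<longrightarrow> le_val d u1 \<longrightarrow> le_val d u2 \<longrightarrow> le_val d u3)"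

lemma fwd_slice_preserves_glbI:
  assumes "\<And>a b c u1 u2 u3 d. le_exp a e \<Longrightarrow> le_exp b e \<Longrightarrow> above_lower_bounds le_exp e a b c \<Longrightarrow>
      fwd_slice \<rho>1 a u1 \<Longrightarrow> fwd_slice \<rho>2 b u2 \<Longrightarrow> fwd_slice \<rho>q c u3 \<Longrightarrow>
      d \<noteq> VHole \<Longrightarrow> le_val d v \<Longrightarrow> le_val d u1 \<Longrightarrow> le_val d u2 \<Longrightarrow> le_val d u3"
  shows "fwd_slice_preserves_glb \<rho>1 \<rho>2 \<rho>q e v"
  unfolding fwd_slice_preserves_glb_def by (metis assms le_val.intros(1))

lemma fwd_slice_preserves_glbD:
  "fwd_slice_preserves_glb \<rho>1 \<rho>2 \<rho>q e v \<Longrightarrow>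
    le_exp a e \<Longrightarrow> le_exp b e \<Longrightarrow> above_lower_bounds le_exp e a b c \<Longrightarrow>
    fwd_slice \<rho>1 a u1 \<Longrightarrow> fwd_slice \<rho>2 b u2 \<Longrightarrow> fwd_slice \<rho>q c u3 \<Longrightarrow>
    le_val d v \<Longrightarrow> le_val d u1 \<Longrightarrow> le_val d u2 \<Longrightarrow> le_val d u3"
  unfolding fwd_slice_preserves_glb_def by blast

lemma fwd_slice_preserves_glb_EVar:
  assumes env: "above_lower_bounds le_env \<sigma> \<rho>1 \<rho>2 \<rho>q"
  shows "fwd_slice_preserves_glb \<rho>1 \<rho>2 \<rho>q (EVar x) (\<sigma> x)"
proof (rule fwd_slice_preserves_glbI, goal_cases)
  case (1 a b c u1 u2 u3 d)
  then have ab: "a = EVar x" "b = EVar x"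
    by (auto simp: le_exp_EVar_right dest: fwd_slice_EHole_le_val)
  with 1 have "c = EVar x"
    by (auto simp: above_lower_bounds_def le_exp_EVar_left intro: le_exp.intros)
  with ab 1 show ?case by (auto simp: fwd_slice_EVar intro: above_lower_bounds_envD[OF env])
qed

lemma fwd_slice_preserves_glb_EUnit: "fwd_slice_preserves_glb \<rho>1 \<rho>2 \<rho>q EUnit VUnit"
proof (rule fwd_slice_preserves_glbI, goal_cases)
  case (1 a b c u1 u2 u3 d)
  then have "a = EUnit" "b = EUnit"
    by (auto simp: le_exp_EUnit_right dest: fwd_slice_EHole_le_val)
  with 1 have "c = EUnit"
    by (auto simp: above_lower_bounds_def le_exp_EUnit_left intro: le_exp.intros)
  with 1 show ?case by (simp add: fwd_slice_EUnit)
qed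

lemma fwd_slice_preserves_glb_EFun:
  assumes env: "above_lower_bounds le_env \<sigma> \<rho>1 \<rho>2 \<rho>q"
  shows "fwd_slice_preserves_glb \<rho>1 \<rho>2 \<rho>q (EFun f x M) (VClo \<sigma> f x M)"
proof (rule fwd_slice_preserves_glbI, goal_cases)
  case (1 a b c u1 u2 u3 d)
  then obtain M1 M2 where "a = EFun f x M1" "b = EFun f x M2" "M1 \<le> M" "M2 \<le> M"
    by (auto simp: le_exp_EFun_right dest: fwd_slice_EHole_le_val)
  with 1 have "u1 = VClo \<rho>1 f x M1" "u2 = VClo \<rho>2 f x M2" by (simp_all add: fwd_slice_EFun)
  with 1 obtain \<rho>d Md where d: "d = VClo \<rho>d f x Md" "le_env \<rho>d \<sigma>" "le_env \<rho>d \<rho>1" "le_env \<rho>d \<rho>2"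
      "Md \<le> M" "Md \<le> M1" "Md \<le> M2"
    by (auto simp: le_val_VClo_right le_env_def)
  with 1 \<open>a = _\<close> \<open>b = _\<close> have "le_exp (EFun f x Md) c"
    by (auto simp: above_lower_bounds_def intro: le_exp.intros)
  then obtain Mc where "c = EFun f x Mc" "Md \<le> Mc" by (auto simp: le_exp_EFun_left)
  moreover have "le_env \<rho>d \<rho>q" using env d by (simp add: above_lower_bounds_def)
  ultimately show ?case using 1 d by (auto simp: fwd_slice_EFun le_env_def intro: le_val.intros)
qed

lemma fwd_slice_preserves_glb_EInl:
  assumes IH: "fwd_slice_preserves_glb \<rho>1 \<rho>2 \<rho>q e v"
  shows "fwd_slice_preserves_glb \<rho>1 \<rho>2 \<rho>q (EInl e) (VInl v)"
proof (rule fwd_slice_preserves_glbI, goal_cases)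
  case (1 a b c u1 u2 u3 d)
  then obtain a0 b0 where ab: "a = EInl a0" "b = EInl b0" "le_exp a0 e" "le_exp b0 e"
    by (auto simp: le_exp_EInl_right dest: fwd_slice_EHole_le_val)
  have inj: "inj EInl" by (simp add: inj_def)
  have meet: "above_lower_bounds le_exp (EInl e) (EInl a0) (EInl b0) c" using 1 ab by simp
  obtain c0 where c: "c = EInl c0" "above_lower_bounds le_exp e a0 b0 c0"
    by (rule above_lower_bounds_unary_exp[OF inj le_exp_EInl_left meet])
  from 1 ab c obtain w1 w2 w3 where w: "u1 = VInl w1" "u2 = VInl w2" "u3 = VInl w3"
      "fwd_slice \<rho>1 a0 w1" "fwd_slice \<rho>2 b0 w2" "fwd_slice \<rho>q c0 w3"
    by (auto simp: fwd_slice_EInl)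
  from 1 obtain d0 where d: "d = VInl d0" "le_val d0 v" by (auto simp: le_val_VInl_right)
  with 1 w have "le_val d0 w1" "le_val d0 w2" by (simp_all add: le_val_VInl_left)
  then have "le_val d0 w3" by (rule fwd_slice_preserves_glbD[OF IH ab(3,4) c(2) w(4-6) d(2)])
  with d w show ?case by (simp add: le_val.intros)
qed

lemma fwd_slice_preserves_glb_EInr:
  assumes IH: "fwd_slice_preserves_glb \<rho>1 \<rho>2 \<rho>q e v"
  shows "fwd_slice_preserves_glb \<rho>1 \<rho>2 \<rho>q (EInr e) (VInr v)"
proof (rule fwd_slice_preserves_glbI, goal_cases)
  case (1 a b c u1 u2 u3 d)
  then obtain a0 b0 where ab: "a = EInr a0" "b = EInr b0" "le_exp a0 e" "le_exp b0 e"
    by (auto simp: le_exp_EInr_right dest: fwd_slice_EHole_le_val)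
  have inj: "inj EInr" by (simp add: inj_def)
  have meet: "above_lower_bounds le_exp (EInr e) (EInr a0) (EInr b0) c" using 1 ab by simp
  obtain c0 where c: "c = EInr c0" "above_lower_bounds le_exp e a0 b0 c0"
    by (rule above_lower_bounds_unary_exp[OF inj le_exp_EInr_left meet])
  from 1 ab c obtain w1 w2 w3 where w: "u1 = VInr w1" "u2 = VInr w2" "u3 = VInr w3"
      "fwd_slice \<rho>1 a0 w1" "fwd_slice \<rho>2 b0 w2" "fwd_slice \<rho>q c0 w3"
    by (auto simp: fwd_slice_EInr)
  from 1 obtain d0 where d: "d = VInr d0" "le_val d0 v" by (auto simp: le_val_VInr_right)
  with 1 w have "le_val d0 w1" "le_val d0 w2" by (simp_all add: le_val_VInr_left)
  then have "le_val d0 w3" by (rule fwd_slice_preserves_glbD[OF IH ab(3,4) c(2) w(4-6) d(2)])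
  with d w show ?case by (simp add: le_val.intros)
qed

lemma fwd_slice_preserves_glb_EPair:
  assumes IH1: "fwd_slice_preserves_glb \<rho>1 \<rho>2 \<rho>q e1 v1"
    and IH2: "fwd_slice_preserves_glb \<rho>1 \<rho>2 \<rho>q e2 v2"
  shows "fwd_slice_preserves_glb \<rho>1 \<rho>2 \<rho>q (EPair e1 e2) (VPair v1 v2)"
proof (rule fwd_slice_preserves_glbI, goal_cases)
  case (1 a b c u1 u2 u3 d)
  then obtain a1 a2 b1 b2 where ab: "a = EPair a1 a2" "b = EPair b1 b2"
      "le_exp a1 e1" "le_exp a2 e2" "le_exp b1 e1" "le_exp b2 e2"
    by (auto simp: le_exp_EPair_right dest: fwd_slice_EHole_le_val)
  from 1 ab obtain c1 c2 where c: "c = EPair c1 c2"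
      "above_lower_bounds le_exp e1 a1 b1 c1" "above_lower_bounds le_exp e2 a2 b2 c2"
    by (auto elim: above_lower_bounds_EPair)
  from 1 ab c obtain w1 w2 w3 x1 x2 x3 where w: "u1 = VPair w1 x1" "u2 = VPair w2 x2" "u3 = VPair w3 x3"
      "fwd_slice \<rho>1 a1 w1" "fwd_slice \<rho>2 b1 w2" "fwd_slice \<rho>q c1 w3"
      "fwd_slice \<rho>1 a2 x1" "fwd_slice \<rho>2 b2 x2" "fwd_slice \<rho>q c2 x3"
    by (auto simp: fwd_slice_EPair)
  from 1 obtain d1 d2 where d: "d = VPair d1 d2" "le_val d1 v1" "le_val d2 v2"
    by (auto simp: le_val_VPair_right)
  with 1 w have "le_val d1 w1" "le_val d1 w2" "le_val d2 x1" "le_val d2 x2"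
    by (simp_all add: le_val_VPair_left)
  then have "le_val d1 w3" "le_val d2 x3"
    using fwd_slice_preserves_glbD[OF IH1 ab(3,5) c(2) w(4-6) d(2)]
      fwd_slice_preserves_glbD[OF IH2 ab(4,6) c(3) w(7-9) d(3)] by blast+
  with d w show ?case by (simp add: le_val.intros)
qed

lemma fwd_slice_preserves_glb_EFst:
  assumes IH: "fwd_slice_preserves_glb \<rho>1 \<rho>2 \<rho>q e (VPair v1 v2)"
  shows "fwd_slice_preserves_glb \<rho>1 \<rho>2 \<rho>q (EFst e) v1"
proof (rule fwd_slice_preserves_glbI, goal_cases)
  case (1 a b c u1 u2 u3 d)
  then obtain a0 b0 where ab: "a = EFst a0" "b = EFst b0" "le_exp a0 e" "le_exp b0 e"
    by (auto simp: le_exp_EFst_right dest: fwd_slice_EHole_le_val)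
  have inj: "inj EFst" by (simp add: inj_def)
  have meet: "above_lower_bounds le_exp (EFst e) (EFst a0) (EFst b0) c" using 1 ab by simp
  obtain c0 where c: "c = EFst c0" "above_lower_bounds le_exp e a0 b0 c0"
    by (rule above_lower_bounds_unary_exp[OF inj le_exp_EFst_left meet])
  from 1 ab obtain y1 y2 where "fwd_slice \<rho>1 a0 (VPair u1 y1)" "fwd_slice \<rho>2 b0 (VPair u2 y2)"
    by (auto simp: fwd_slice_EFst le_val_VHole_right)
  moreover from 1 c obtain w3 where w3: "fwd_slice \<rho>q c0 w3" "w3 = VHole \<or> (\<exists>y3. w3 = VPair u3 y3)"
    by (auto simp: fwd_slice_EFst)
  moreover have "le_val (VPair d VHole) (VPair v1 v2)" "le_val (VPair d VHole) (VPair u1 y1)"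
    "le_val (VPair d VHole) (VPair u2 y2)" for y1 y2
    using 1 by (simp_all add: le_val.intros)
  ultimately have "le_val (VPair d VHole) w3"
    using fwd_slice_preserves_glbD[OF IH ab(3,4) c(2)] by blast
  with w3(2) show ?case by (auto simp: le_val_VPair_left)
qed

lemma fwd_slice_preserves_glb_ESnd:
  assumes IH: "fwd_slice_preserves_glb \<rho>1 \<rho>2 \<rho>q e (VPair v1 v2)"
  shows "fwd_slice_preserves_glb \<rho>1 \<rho>2 \<rho>q (ESnd e) v2"
proof (rule fwd_slice_preserves_glbI, goal_cases)
  case (1 a b c u1 u2 u3 d)
  then obtain a0 b0 where ab: "a = ESnd a0" "b = ESnd b0" "le_exp a0 e" "le_exp b0 e"
    by (auto simp: le_exp_ESnd_right dest: fwd_slice_EHole_le_val)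
  have inj: "inj ESnd" by (simp add: inj_def)
  have meet: "above_lower_bounds le_exp (ESnd e) (ESnd a0) (ESnd b0) c" using 1 ab by simp
  obtain c0 where c: "c = ESnd c0" "above_lower_bounds le_exp e a0 b0 c0"
    by (rule above_lower_bounds_unary_exp[OF inj le_exp_ESnd_left meet])
  from 1 ab obtain y1 y2 where "fwd_slice \<rho>1 a0 (VPair y1 u1)" "fwd_slice \<rho>2 b0 (VPair y2 u2)"
    by (auto simp: fwd_slice_ESnd le_val_VHole_right)
  moreover from 1 c obtain w3 where w3: "fwd_slice \<rho>q c0 w3" "w3 = VHole \<or> (\<exists>y3. w3 = VPair y3 u3)"
    by (auto simp: fwd_slice_ESnd)
  moreover have "le_val (VPair VHole d) (VPair v1 v2)" "le_val (VPair VHole d) (VPair y1 u1)"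
    "le_val (VPair VHole d) (VPair y2 u2)" for y1 y2
    using 1 by (simp_all add: le_val.intros)
  ultimately have "le_val (VPair VHole d) w3"
    using fwd_slice_preserves_glbD[OF IH ab(3,4) c(2)] by blast
  with w3(2) show ?case by (auto simp: le_val_VPair_left)
qed

lemma fwd_slice_preserves_glb_eval:
  fixes \<sigma> :: "('x, 'm::order) env"
  shows "eval \<sigma> e v \<Longrightarrow> above_lower_bounds le_env \<sigma> \<rho>1 \<rho>2 \<rho>q \<Longrightarrow> fwd_slice_preserves_glb \<rho>1 \<rho>2 \<rho>q e v"
  by (induction rule: eval.induct)
    (simp_all add: fwd_slice_preserves_glb_EVar fwd_slice_preserves_glb_EUnit fwd_slice_preserves_glb_EFun
      fwd_slice_preserves_glb_EInl fwd_slice_preserves_glb_EInr fwd_slice_preserves_glb_EPair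
      fwd_slice_preserves_glb_EFst fwd_slice_preserves_glb_ESnd)

lemma is_meet_in_prefix_pair_above_lower_bounds:
  fixes \<sigma> :: "('x, 'm::order) env"
  assumes "is_meet_in le_pair (prefix_pair (\<sigma>, e)) (\<rho>1, a) (\<rho>2, b) (\<rho>q, c)"
  shows "above_lower_bounds le_env \<sigma> \<rho>1 \<rho>2 \<rho>q" "above_lower_bounds le_exp e a b c"
proof -
  have "le_env (\<lambda>_. VHole) \<rho>" for \<rho> :: "('x, 'm) env" by (simp add: le_env_def le_val.intros)
  moreover have "le_exp EHole e'" for e' :: "('x, 'm) exp" by (rule le_exp.intros)
  ultimately show "above_lower_bounds le_env \<sigma> \<rho>1 \<rho>2 \<rho>q" "above_lower_bounds le_exp e a b c"
    using assms unfolding is_meet_in_def prefix_pair_def le_pair_def above_lower_bounds_def by auto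
qed

lemma fwd_slice_fwd_below_eval:
  fixes \<rho> :: "('x, 'm::order) env"
  shows "eval \<sigma> e v \<Longrightarrow> le_env \<rho> \<sigma> \<Longrightarrow> le_exp a e \<Longrightarrow> fwd_slice \<rho> a (fwd (\<rho>, a))"
  using fwd_slice_exists_below_eval fwd_eq by metis

theorem lemma3p4:
  fixes \<sigma> :: "('x, 'm::order) env" and e :: "('x, 'm) exp" and v :: "('x, 'm) val"
  assumes "finite (edom \<sigma>)"
    and "\<forall>y \<in> edom \<sigma>. hf_val (\<sigma> y)"
    and "eval \<sigma> e v"
    and "p \<in> prefix_pair (\<sigma>, e)" and "p' \<in> prefix_pair (\<sigma>, e)"
    and "is_meet_in le_pair (prefix_pair (\<sigma>, e)) p p' q"
  shows "is_meet_in le_val (prefix_val v) (fwd p) (fwd p') (fwd q)"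
proof -
  obtain \<rho>1 a \<rho>2 b \<rho>q c where pq: "p = (\<rho>1, a)" "p' = (\<rho>2, b)" "q = (\<rho>q, c)"
    by (cases p, cases p', cases q) blast
  have meet: "is_meet_in le_pair (prefix_pair (\<sigma>, e)) (\<rho>1, a) (\<rho>2, b) (\<rho>q, c)"
    using assms(6) pq by simp
  have below: "le_env \<rho>1 \<sigma>" "le_exp a e" "le_env \<rho>2 \<sigma>" "le_exp b e" "le_env \<rho>q \<sigma>" "le_exp c e"
      "le_env \<rho>q \<rho>1" "le_exp c a" "le_env \<rho>q \<rho>2" "le_exp c b"
    using assms(4,5) meet pq by (auto simp: is_meet_in_def prefix_pair_def le_pair_def)
  have slices: "fwd_slice \<rho>1 a (fwd p)" "fwd_slice \<rho>2 b (fwd p')" "fwd_slice \<rho>q c (fwd q)"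
    using fwd_slice_fwd_below_eval[OF assms(3)] below pq by simp_all
  have "fwd_slice_preserves_glb \<rho>1 \<rho>2 \<rho>q e v"
    by (rule fwd_slice_preserves_glb_eval[OF assms(3) is_meet_in_prefix_pair_above_lower_bounds(1)[OF meet]])
  from fwd_slice_preserves_glbD[OF this below(2,4) is_meet_in_prefix_pair_above_lower_bounds(2)[OF meet] slices]
  have "\<forall>d \<in> prefix_val v. le_val d (fwd p) \<longrightarrow> le_val d (fwd p') \<longrightarrow> le_val d (fwd q)"
    by (simp add: prefix_val_def)
  moreover have "le_val (fwd q) v" "le_val (fwd q) (fwd p)" "le_val (fwd q) (fwd p')"
    using fwd_slice_mono[OF slices(3)] slices eval_imp_fwd_slice[OF assms(3)] below by simp_all
  ultimately show ?thesis unfolding is_meet_in_def prefix_val_def by simp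
qed

end
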